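(* Fix an integer $r\geq 3$, and let $G$ be a balanced $r$-partite graph on $rn$ vertices with $\delta^*(G)>\left(1-\frac{1}{r-1}\right)n$. Then for any vertices $u,v\in V(G)$ there exist copies $K$ and $K'$ of $K_r$ in $G$ such that $u\in V(K)$, $v\in V(K')$, and $K$ and $K'$ have at least one vertex in common.
   Context: For an $r$-partite graph $G$ with vertex classes $V_1,\dots,V_r$, $G$ is balanced if all classes have the same size, and $\delta^*(G)$ is the largest integer $m$ such that for all $i\neq j$ every vertex of $V_i$ has at least $m$ neighbours in $V_j$. *)

theory Defs
  imports Complex_Main
begin

definition r_partite :: "nat \<Rightarrow> 'a set \<Rightarrow> ('a \<Rightarrow> 'a \<Rightarrow> bool) \<Rightarrow> (nat \<Rightarrow> 'a set) \<Rightarrow> bool" where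
  "r_partite r V E P \<longleftrightarrow>
     finite V \<and>
     (\<forall>x y. E x y \<longrightarrow> x \<in> V \<and> y \<in> V) \<and>
     (\<forall>x y. E x y \<longrightarrow> E y x) \<and>
     (\<forall>x. \<not> E x x) \<and>
     (\<Union>i<r. P i) = V \<and>
     (\<forall>i<r. \<forall>j<r. i \<noteq> j \<longrightarrow> P i \<inter> P j = {}) \<and>
     (\<forall>i<r. \<forall>x\<in>P i. \<forall>y\<in>P i. \<not> E x y)"

definition balanced :: "nat \<Rightarrow> (nat \<Rightarrow> 'a set) \<Rightarrow> nat \<Rightarrow> bool" where
  "balanced r P n \<longleftrightarrow> (\<forall>i<r. card (P i) = n)"

definition delta_star :: "nat \<Rightarrow> ('a \<Rightarrow> 'a \<Rightarrow> bool) \<Rightarrow> (nat \<Rightarrow> 'a set) \<Rightarrow> nat" where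
  "delta_star r E P = (GREATEST m. \<forall>i<r. \<forall>j<r. i \<noteq> j \<longrightarrow>
       (\<forall>x\<in>P i. m \<le> card {y \<in> P j. E x y}))"

definition is_Kr :: "nat \<Rightarrow> 'a set \<Rightarrow> ('a \<Rightarrow> 'a \<Rightarrow> bool) \<Rightarrow> 'a set \<Rightarrow> bool" where
  "is_Kr r V E K \<longleftrightarrow> K \<subseteq> V \<and> finite K \<and> card K = r \<and>
     (\<forall>x\<in>K. \<forall>y\<in>K. x \<noteq> y \<longrightarrow> E x y)"

end

theory Submission
  imports Defs
begin

text \<open>Write \<open>d = \<delta>\<^sup>*(G)\<close>. The degree condition is equivalent to \<open>(r - 1)(n - d) < n\<close>.
  A vertex has at most \<open>n - d\<close> non-neighbours in any other class, so any set \<open>S\<close> of at most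
  \<open>r - 1\<close> vertices, which by pigeonhole misses some class entirely, has a common neighbour
  in that class. Hence every clique with fewer than \<open>r\<close> vertices extends by one vertex, and
  every clique with at most \<open>r\<close> vertices lies in a copy of \<open>K\<^sub>r\<close>. Now take a common
  neighbour \<open>w\<close> of \<open>u\<close> and \<open>v\<close> and extend the edges \<open>uw\<close> and \<open>vw\<close> to copies of \<open>K\<^sub>r\<close>.\<close>

definition partite_min_degree :: "nat \<Rightarrow> ('a \<Rightarrow> 'a \<Rightarrow> bool) \<Rightarrow> (nat \<Rightarrow> 'a set) \<Rightarrow> nat \<Rightarrow> bool" where
  "partite_min_degree r E P d \<longleftrightarrow>
     (\<forall>i<r. \<forall>j<r. i \<noteq> j \<longrightarrow> (\<forall>x\<in>P i. d \<le> card {y \<in> P j. E x y}))"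

lemma delta_star_eq_Greatest: "delta_star r E P = (GREATEST d. partite_min_degree r E P d)"
  unfolding delta_star_def partite_min_degree_def ..

lemma r_partite_finite: "r_partite r V E P \<Longrightarrow> finite V"
  unfolding r_partite_def by blast

lemma r_partite_sym: "r_partite r V E P \<Longrightarrow> E x y \<Longrightarrow> E y x"
  unfolding r_partite_def by blast

lemma r_partite_class_subset: "r_partite r V E P \<Longrightarrow> i < r \<Longrightarrow> P i \<subseteq> V"
  unfolding r_partite_def by blast

lemma r_partite_finite_class: "r_partite r V E P \<Longrightarrow> i < r \<Longrightarrow> finite (P i)"
  by (meson r_partite_class_subset r_partite_finite finite_subset)

lemma r_partite_vertex_in_class: "r_partite r V E P \<Longrightarrow> x \<in> V \<Longrightarrow> \<exists>i<r. x \<in> P i"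
  unfolding r_partite_def by blast

lemma r_partite_class_unique:
  "r_partite r V E P \<Longrightarrow> i < r \<Longrightarrow> j < r \<Longrightarrow> x \<in> P i \<Longrightarrow> x \<in> P j \<Longrightarrow> i = j"
  unfolding r_partite_def by blast

lemma r_partite_avoids_class:
  assumes rp: "r_partite r V E P" and "S \<subseteq> V" and "card S < r"
  shows "\<exists>j<r. S \<inter> P j = {}"
proof -
  have fin: "finite S" using assms r_partite_finite finite_subset by blast
  obtain cls where cls: "\<forall>x\<in>S. cls x < r \<and> x \<in> P (cls x)"
    using r_partite_vertex_in_class[OF rp] \<open>S \<subseteq> V\<close> by (metis subsetD)
  have "card (cls ` S) < card {..<r}"
    using card_image_le[OF fin, of cls] \<open>card S < r\<close> by simp
  then obtain j where j: "j < r" "j \<notin> cls ` S"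
    by (metis card_mono finite_imageI fin not_le subsetI lessThan_iff)
  have "S \<inter> P j = {}"
    using j cls r_partite_class_unique[OF rp] by (metis disjoint_iff image_eqI)
  with j show ?thesis by blast
qed

lemma balanced_card_non_neighbours:
  assumes rp: "r_partite r V E P" and bal: "balanced r P n"
    and mindeg: "partite_min_degree r E P d"
    and "i < r" "j < r" "i \<noteq> j" "x \<in> P i"
  shows "card {y \<in> P j. \<not> E x y} \<le> n - d"
proof -
  have "{y \<in> P j. \<not> E x y} = P j - {y \<in> P j. E x y}" by blast
  then have "card {y \<in> P j. \<not> E x y} = n - card {y \<in> P j. E x y}"
    using bal r_partite_finite_class[OF rp \<open>j < r\<close>] \<open>j < r\<close>
    by (simp add: card_Diff_subset balanced_def)
  moreover have "d \<le> card {y \<in> P j. E x y}"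
    using mindeg assms(4-7) unfolding partite_min_degree_def by blast
  ultimately show ?thesis by linarith
qed

lemma balanced_common_neighbour_in_class:
  assumes rp: "r_partite r V E P" and bal: "balanced r P n"
    and mindeg: "partite_min_degree r E P d"
    and "S \<subseteq> V" and j: "j < r" "S \<inter> P j = {}"
    and small: "card S * (n - d) < n"
  shows "\<exists>w\<in>P j. \<forall>x\<in>S. E x w"
proof (rule ccontr)
  assume "\<not> ?thesis"
  then have cover: "P j \<subseteq> (\<Union>x\<in>S. {y \<in> P j. \<not> E x y})" by auto
  have finS: "finite S" using assms r_partite_finite finite_subset by blast
  have finP: "finite (P j)" using r_partite_finite_class[OF rp j(1)] .
  have non_nbrs: "card {y \<in> P j. \<not> E x y} \<le> n - d" if x: "x \<in> S" for x
  proof -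
    obtain i where "i < r" "x \<in> P i" using r_partite_vertex_in_class[OF rp] x \<open>S \<subseteq> V\<close> by blast
    moreover have "i \<noteq> j" using calculation j x by blast
    ultimately show ?thesis using balanced_card_non_neighbours[OF rp bal mindeg] j by blast
  qed
  have "n = card (P j)" using bal j unfolding balanced_def by simp
  also have "\<dots> \<le> card (\<Union>x\<in>S. {y \<in> P j. \<not> E x y})"
    using cover finS finP by (intro card_mono) auto
  also have "\<dots> \<le> (\<Sum>x\<in>S. card {y \<in> P j. \<not> E x y})" using card_UN_le[OF finS] .
  also have "\<dots> \<le> card S * (n - d)" using sum_mono[OF non_nbrs] by simp
  finally show False using small by simp
qed

lemma small_set_common_neighbour:
  assumes rp: "r_partite r V E P" and bal: "balanced r P n"
    and mindeg: "partite_min_degree r E P d" and key: "(r - 1) * (n - d) < n"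
    and "S \<subseteq> V" and "card S < r"
  shows "\<exists>w\<in>V - S. \<forall>x\<in>S. E x w"
proof -
  obtain j where j: "j < r" "S \<inter> P j = {}"
    using r_partite_avoids_class[OF rp \<open>S \<subseteq> V\<close> \<open>card S < r\<close>] by blast
  have "card S * (n - d) \<le> (r - 1) * (n - d)" using \<open>card S < r\<close> by (intro mult_right_mono) auto
  with key have "card S * (n - d) < n" by linarith
  then obtain w where "w \<in> P j" "\<forall>x\<in>S. E x w"
    using balanced_common_neighbour_in_class[OF rp bal mindeg \<open>S \<subseteq> V\<close> j] by blast
  moreover have "w \<in> V - S" using calculation j r_partite_class_subset[OF rp j(1)] by blast
  ultimately show ?thesis by blast
qed

lemma clique_extends_to_Kr:
  assumes rp: "r_partite r V E P" and bal: "balanced r P n"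
    and mindeg: "partite_min_degree r E P d" and key: "(r - 1) * (n - d) < n"
    and "S \<subseteq> V" and clique: "\<forall>x\<in>S. \<forall>y\<in>S. x \<noteq> y \<longrightarrow> E x y" and "card S \<le> r"
  shows "\<exists>K. is_Kr r V E K \<and> S \<subseteq> K"
proof -
  obtain k where "card S + k = r" using \<open>card S \<le> r\<close> le_Suc_ex by blast
  with \<open>S \<subseteq> V\<close> clique show ?thesis
  proof (induction k arbitrary: S)
    case 0
    then show ?case using r_partite_finite[OF rp] finite_subset unfolding is_Kr_def by fastforce
  next
    case (Suc k)
    then obtain w where w: "w \<in> V - S" "\<forall>x\<in>S. E x w"
      using small_set_common_neighbour[OF rp bal mindeg key, of S] by auto
    have "finite S" using Suc.prems(1) r_partite_finite[OF rp] by (rule finite_subset)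
    have "insert w S \<subseteq> V" using Suc.prems(1) w by blast
    moreover have "\<forall>x\<in>insert w S. \<forall>y\<in>insert w S. x \<noteq> y \<longrightarrow> E x y"
      using Suc.prems(2) w r_partite_sym[OF rp] by blast
    moreover have "card (insert w S) + k = r" using \<open>finite S\<close> Suc.prems(3) w by simp
    ultimately have "\<exists>K. is_Kr r V E K \<and> insert w S \<subseteq> K" by (rule Suc.IH)
    then show ?case by blast
  qed
qed

lemma delta_star_partite_min_degree:
  assumes rp: "r_partite r V E P" and bal: "balanced r P n" and "2 \<le> r" and "0 < n"
  shows "partite_min_degree r E P (delta_star r E P)" and "delta_star r E P \<le> n"
proof -
  have bounded: "d \<le> n" if "partite_min_degree r E P d" for d
  proof -
    obtain x where x: "x \<in> P 0" using bal \<open>0 < n\<close> \<open>2 \<le> r\<close> unfolding balanced_def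
      by (metis card.empty ex_in_conv less_le_trans not_less_iff_gr_or_eq pos2)
    have "d \<le> card {y \<in> P 1. E x y}"
      using that x \<open>2 \<le> r\<close> unfolding partite_min_degree_def by force
    also have "\<dots> \<le> card (P 1)"
      using r_partite_finite_class[OF rp] \<open>2 \<le> r\<close> by (intro card_mono) auto
    finally show ?thesis using bal \<open>2 \<le> r\<close> unfolding balanced_def by simp
  qed
  have "partite_min_degree r E P 0" unfolding partite_min_degree_def by simp
  then show "partite_min_degree r E P (delta_star r E P)"
    unfolding delta_star_eq_Greatest using bounded by (rule GreatestI_nat)
  then show "delta_star r E P \<le> n" by (rule bounded)
qed

lemma degree_condition_iff_nat:
  assumes "2 \<le> r" and "d \<le> n"
  shows "real d > (1 - 1 / (real r - 1)) * real n \<longleftrightarrow> (r - 1) * (n - d) < n"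
proof -
  have "real r - 1 > 0" using assms by simp
  then have "real d > (1 - 1 / (real r - 1)) * real n
      \<longleftrightarrow> (real r - 1) * (real n - real d) < real n"
    by (simp add: field_simps)
  also have "\<dots> \<longleftrightarrow> real ((r - 1) * (n - d)) < real n"
    using assms by (simp add: of_nat_diff)
  finally show ?thesis by linarith
qed

theorem proposition2p4:
  fixes r n :: nat and V :: "'a set" and E :: "'a \<Rightarrow> 'a \<Rightarrow> bool" and P :: "nat \<Rightarrow> 'a set"
  assumes "r \<ge> 3"
    and "r_partite r V E P"
    and "balanced r P n"
    and "real (delta_star r E P) > (1 - 1 / (real r - 1)) * real n"
  shows "\<forall>u\<in>V. \<forall>v\<in>V. \<exists>K K'. is_Kr r V E K \<and> is_Kr r V E K' \<and>
           u \<in> K \<and> v \<in> K' \<and> K \<inter> K' \<noteq> {}"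
proof (intro ballI)
  fix u v assume "u \<in> V" "v \<in> V"
  note rp = assms(2) and bal = assms(3)
  have "0 < n"
    using r_partite_vertex_in_class[OF rp \<open>u \<in> V\<close>] r_partite_finite_class[OF rp] bal
    unfolding balanced_def by (metis card_gt_0_iff empty_iff)
  define d where "d = delta_star r E P"
  have mindeg: "partite_min_degree r E P d" and "d \<le> n"
    using delta_star_partite_min_degree[OF rp bal _ \<open>0 < n\<close>] assms(1) unfolding d_def by auto
  have key: "(r - 1) * (n - d) < n"
    using degree_condition_iff_nat[of r d n] assms(1,4) \<open>d \<le> n\<close> unfolding d_def by simp
  have "card {u, v} \<le> 2" by (cases "u = v") auto
  then have "card {u, v} < r" using assms(1) by simp
  then obtain w where w: "w \<in> V" "E u w" "E v w"
    using small_set_common_neighbour[OF rp bal mindeg key, of "{u, v}"] \<open>u \<in> V\<close> \<open>v \<in> V\<close> by auto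
  have "\<exists>K. is_Kr r V E K \<and> {x, w} \<subseteq> K" if "x \<in> V" "E x w" for x
    using that w assms(1) r_partite_sym[OF rp]
    by (intro clique_extends_to_Kr[OF rp bal mindeg key]) (auto simp: card_insert_if)
  then obtain K K' where "is_Kr r V E K" "{u, w} \<subseteq> K" "is_Kr r V E K'" "{v, w} \<subseteq> K'"
    using \<open>u \<in> V\<close> \<open>v \<in> V\<close> w by meson
  then show "\<exists>K K'. is_Kr r V E K \<and> is_Kr r V E K' \<and> u \<in> K \<and> v \<in> K' \<and> K \<inter> K' \<noteq> {}"
    by blast
qed

end
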